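(* Let $\delta\ge 2$ be an integer and let $G$ be a connected graph of even order $n$ with minimum degree $\delta$, where $n\ge \max\{7\delta-7,\ \tfrac14\delta^2+\tfrac12\delta+6\}$. If $$\rho_Q(G)\ \ge\ \rho_Q\big(K_\delta\vee(K_{n-2\delta+1}\cup(\delta-1)K_1)\big),$$ then $G$ contains an even factor, unless $G\cong K_\delta\vee(K_{n-2\delta+1}\cup(\delta-1)K_1)$.
   Context: All graphs are finite, simple and undirected. An even factor of a graph $G$ is a spanning subgraph $F$ of $G$ such that $d_F(v)$ is a nonzero even number for every vertex $v\in V(G)$. The signless Laplacian matrix is $Q(G)=A(G)+D(G)$, where $A(G)$ is the adjacency matrix and $D(G)$ the diagonal matrix of vertex degrees; $\rho_Q(G)$ denotes the largest eigenvalue of $Q(G)$. $K_m$ is the complete graph on $m$ vertices, $G_1\cup G_2$ is the disjoint union, $tK_1$ is the edgeless graph on $t$ vertices, and $G_1\vee G_2$ (join) is obtained from $G_1\cup G_2$ by adding all edges between $V(G_1)$ and $V(G_2)$. *)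

theory Defs
  imports Complex_Main
begin

definition graph :: "'a set \<Rightarrow> ('a \<Rightarrow> 'a \<Rightarrow> bool) \<Rightarrow> bool" where
  "graph V E \<longleftrightarrow> finite V \<and> (\<forall>u v. E u v \<longrightarrow> u \<in> V \<and> v \<in> V \<and> u \<noteq> v \<and> E v u)"

definition degree :: "'a set \<Rightarrow> ('a \<Rightarrow> 'a \<Rightarrow> bool) \<Rightarrow> 'a \<Rightarrow> nat" where
  "degree V E v = card {u \<in> V. E v u}"

definition min_degree :: "'a set \<Rightarrow> ('a \<Rightarrow> 'a \<Rightarrow> bool) \<Rightarrow> nat" where
  "min_degree V E = Min (degree V E ` V)"

definition connected_graph :: "'a set \<Rightarrow> ('a \<Rightarrow> 'a \<Rightarrow> bool) \<Rightarrow> bool" where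
  "connected_graph V E \<longleftrightarrow> V \<noteq> {} \<and> (\<forall>u\<in>V. \<forall>v\<in>V. E\<^sup>*\<^sup>* u v)"

definition has_even_factor :: "'a set \<Rightarrow> ('a \<Rightarrow> 'a \<Rightarrow> bool) \<Rightarrow> bool" where
  "has_even_factor V E \<longleftrightarrow> (\<exists>F. (\<forall>u v. F u v \<longrightarrow> E u v) \<and> (\<forall>u v. F u v \<longrightarrow> F v u) \<and>
       (\<forall>v\<in>V. degree V F v \<noteq> 0 \<and> even (degree V F v)))"

definition signless_laplacian :: "'a set \<Rightarrow> ('a \<Rightarrow> 'a \<Rightarrow> bool) \<Rightarrow> 'a \<Rightarrow> 'a \<Rightarrow> real" where
  "signless_laplacian V E u v =
     (if E u v then 1 else 0) + (if u = v then real (degree V E u) else 0)"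

definition Q_eigenvalue :: "'a set \<Rightarrow> ('a \<Rightarrow> 'a \<Rightarrow> bool) \<Rightarrow> real \<Rightarrow> bool" where
  "Q_eigenvalue V E \<mu> \<longleftrightarrow> (\<exists>x :: 'a \<Rightarrow> real. (\<exists>v\<in>V. x v \<noteq> 0) \<and>
      (\<forall>u\<in>V. (\<Sum>w\<in>V. signless_laplacian V E u w * x w) = \<mu> * x u))"

text \<open>Largest eigenvalue of Q (real symmetric, so all eigenvalues are real).\<close>
definition rho_Q :: "'a set \<Rightarrow> ('a \<Rightarrow> 'a \<Rightarrow> bool) \<Rightarrow> real" where
  "rho_Q V E = Max {\<mu>. Q_eigenvalue V E \<mu>}"

definition graph_iso :: "'a set \<Rightarrow> ('a \<Rightarrow> 'a \<Rightarrow> bool) \<Rightarrow> 'b set \<Rightarrow> ('b \<Rightarrow> 'b \<Rightarrow> bool) \<Rightarrow> bool" where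
  "graph_iso V E W F \<longleftrightarrow> (\<exists>f. bij_betw f V W \<and> (\<forall>u\<in>V. \<forall>v\<in>V. E u v \<longleftrightarrow> F (f u) (f v)))"

text \<open>K_d \<or> (K_{n-2d+1} \<union> (d-1)K_1) on vertices {0..<n}:
  vertices 0..d-1 form K_d, vertices d..n-d form K_{n-2d+1},
  vertices n-d+1..n-1 are the d-1 isolated vertices of the union.\<close>
definition extremal_V :: "nat \<Rightarrow> nat set" where
  "extremal_V n = {0..<n}"

definition extremal_E :: "nat \<Rightarrow> nat \<Rightarrow> nat \<Rightarrow> nat \<Rightarrow> bool" where
  "extremal_E n d i j \<longleftrightarrow> i < n \<and> j < n \<and> i \<noteq> j \<and>
     (i < d \<or> j < d \<or> (i < n - d + 1 \<and> j < n - d + 1))"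

end

theory Submission
  imports Defs "Jordan_Normal_Form.Char_Poly"
begin

text \<open>
  The \<open>Q\<close>-index of the extremal graph exceeds \<open>2(n - \<delta>)\<close>: an eigenvector constant on its
  three blocks reduces the eigenvalue equation to a secular equation with a root above
  \<open>2n - 2\<delta>\<close>. Conversely, at a vertex \<open>v\<close> maximising \<open>|x v| / d v\<close> for a \<open>Q\<close>-eigenvector \<open>x\<close>
  one has \<open>|\<mu>| d v \<le> d v\<^sup>2 + (\<Sum>w \<sim> v. d w)\<close>, which forces \<open>\<rho>\<^sub>Q \<le> 2(n - \<delta>)\<close> as soon as the
  degree sum is at most \<open>(n - 1)(n - 2\<delta> + 2)\<close>. So \<open>G\<close> has a larger degree sum.

  For the even factor take a parity join \<open>J\<close> (a subgraph with the degree parities of \<open>G\<close>) of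
  minimum size and, among those, with fewest saturated vertices (all of whose edges lie in
  \<open>J\<close>). Its complement is an even subgraph, and an even factor unless some vertex \<open>v\<close> is
  saturated. Switching \<open>J\<close> along triangles and 4-cycles shows that the neighbourhood of \<open>v\<close>
  is independent, that no other vertex has three neighbours in it, and that a vertex with
  two such neighbours can be saturated in place of \<open>v\<close>; counting edges in either case bounds
  the degree sum by \<open>(n - 1)(n - 2\<delta> + 2)\<close> when \<open>n \<ge> 7\<delta> - 7\<close>.
\<close>

section \<open>Eigenvalues of real symmetric matrices\<close>

definition eigenvalue_on :: "'v set \<Rightarrow> ('v \<Rightarrow> 'v \<Rightarrow> 'b::comm_ring_1) \<Rightarrow> 'b \<Rightarrow> bool" where
  "eigenvalue_on V M \<mu> \<longleftrightarrow> (\<exists>x. (\<exists>v\<in>V. x v \<noteq> 0) \<and> (\<forall>u\<in>V. (\<Sum>w\<in>V. M u w * x w) = \<mu> * x u))"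

lemma Q_eigenvalue_iff_eigenvalue_on: "Q_eigenvalue V E \<mu> \<longleftrightarrow> eigenvalue_on V (signless_laplacian V E) \<mu>"
  unfolding Q_eigenvalue_def eigenvalue_on_def ..

lemma eigenvalue_on_cong:
  assumes "\<And>u w. u \<in> V \<Longrightarrow> w \<in> V \<Longrightarrow> M u w = M' u w"
  shows "eigenvalue_on V M \<mu> \<longleftrightarrow> eigenvalue_on V M' \<mu>"
proof -
  have "(\<Sum>w\<in>V. M u w * x w) = (\<Sum>w\<in>V. M' u w * x w)" if "u \<in> V" for u x
    using assms that by (intro sum.cong) auto
  then show ?thesis unfolding eigenvalue_on_def by auto
qed

lemma eigenvalue_on_reindex:
  assumes bij: "bij_betw f A V" and ev: "eigenvalue_on V M \<mu>"
  shows "eigenvalue_on A (\<lambda>i j. M (f i) (f j)) \<mu>"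
proof -
  obtain x where x: "\<exists>v\<in>V. x v \<noteq> 0" "\<forall>u\<in>V. (\<Sum>w\<in>V. M u w * x w) = \<mu> * x u"
    using ev unfolding eigenvalue_on_def by blast
  have img: "f ` A = V" using bij by (simp add: bij_betw_def)
  have "\<exists>i\<in>A. x (f i) \<noteq> 0" using x(1) img by blast
  moreover have "(\<Sum>j\<in>A. M (f i) (f j) * x (f j)) = \<mu> * x (f i)" if "i \<in> A" for i
    using x(2) that img sum.reindex_bij_betw[OF bij, of "\<lambda>w. M (f i) w * x w"] by auto
  ultimately show ?thesis unfolding eigenvalue_on_def by (intro exI[of _ "x \<circ> f"]) auto
qed

lemma eigenvalue_on_reindex_iff:
  assumes bij: "bij_betw f A V"
  shows "eigenvalue_on A (\<lambda>i j. M (f i) (f j)) \<mu> \<longleftrightarrow> eigenvalue_on V M \<mu>"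
proof
  assume "eigenvalue_on A (\<lambda>i j. M (f i) (f j)) \<mu>"
  then have "eigenvalue_on V (\<lambda>u w. M (f (inv_into A f u)) (f (inv_into A f w))) \<mu>"
    using eigenvalue_on_reindex[OF bij_betw_inv_into[OF bij]] by blast
  moreover have "f (inv_into A f u) = u" if "u \<in> V" for u
    using bij that by (simp add: bij_betw_def f_inv_into_f)
  ultimately show "eigenvalue_on V M \<mu>"
    using eigenvalue_on_cong[of V "\<lambda>u w. M (f (inv_into A f u)) (f (inv_into A f w))" M] by simp
qed (rule eigenvalue_on_reindex[OF bij])

lemma eigenvalue_on_lessThan_iff:
  "eigenvalue_on {..<n} a \<mu> \<longleftrightarrow> eigenvalue (mat n n (\<lambda>(i, j). a i j)) \<mu>"
  (is "_ \<longleftrightarrow> eigenvalue ?A \<mu>")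
proof
  assume "eigenvalue_on {..<n} a \<mu>"
  then obtain z where z: "\<exists>i<n. z i \<noteq> 0" "\<forall>i<n. (\<Sum>j<n. a i j * z j) = \<mu> * z i"
    unfolding eigenvalue_on_def by auto
  have "?A *\<^sub>v vec n z = \<mu> \<cdot>\<^sub>v vec n z"
    using z(2) by (intro eq_vecI) (auto simp: scalar_prod_def atLeast0LessThan)
  moreover have "vec n z \<noteq> 0\<^sub>v n" using z(1) by (auto simp: vec_eq_iff)
  ultimately have "eigenvector ?A (vec n z) \<mu>" unfolding eigenvector_def by simp
  then show "eigenvalue ?A \<mu>" unfolding eigenvalue_def by blast
next
  assume "eigenvalue ?A \<mu>"
  then obtain v where v: "v \<in> carrier_vec n" "v \<noteq> 0\<^sub>v n" "?A *\<^sub>v v = \<mu> \<cdot>\<^sub>v v"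
    unfolding eigenvalue_def eigenvector_def by auto
  have "\<exists>i<n. v $ i \<noteq> 0" using v(1,2) unfolding vec_eq_iff by auto
  moreover have "(\<Sum>j<n. a i j * v $ j) = \<mu> * v $ i" if "i < n" for i
    using arg_cong[OF v(3), of "\<lambda>w. w $ i"] v(1) that by (simp add: scalar_prod_def atLeast0LessThan)
  ultimately show "eigenvalue_on {..<n} a \<mu>" unfolding eigenvalue_on_def by auto
qed

lemma ex_bij_betw_lessThan_card:
  assumes "finite V"
  obtains f where "bij_betw f {..<card V} V"
  using ex_bij_betw_nat_finite[OF assms] by (auto simp: atLeast0LessThan)

lemma finite_eigenvalues_on:
  fixes M :: "'v \<Rightarrow> 'v \<Rightarrow> 'b::field"
  assumes "finite V"
  shows "finite {\<mu>. eigenvalue_on V M \<mu>}"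
proof -
  obtain f where bij: "bij_betw f {..<card V} V" using ex_bij_betw_lessThan_card[OF assms] .
  let ?A = "mat (card V) (card V) (\<lambda>(i, j). M (f i) (f j))"
  have A: "?A \<in> carrier_mat (card V) (card V)" by simp
  have "char_poly ?A \<noteq> 0" using degree_monic_char_poly[OF A] by auto
  moreover have "{\<mu>. eigenvalue_on V M \<mu>} \<subseteq> {\<mu>. poly (char_poly ?A) \<mu> = 0}"
    using eigenvalue_root_char_poly[OF A]
    by (auto simp: eigenvalue_on_reindex_iff[OF bij, symmetric] eigenvalue_on_lessThan_iff)
  ultimately show ?thesis using poly_roots_finite finite_subset by blast
qed

lemma complex_eigenvalue_on_exists:
  fixes M :: "'v \<Rightarrow> 'v \<Rightarrow> complex"
  assumes "finite V" "V \<noteq> {}"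
  shows "\<exists>c. eigenvalue_on V M c"
proof -
  obtain f where bij: "bij_betw f {..<card V} V" using ex_bij_betw_lessThan_card[OF assms(1)] .
  let ?A = "mat (card V) (card V) (\<lambda>(i, j). M (f i) (f j))"
  have A: "?A \<in> carrier_mat (card V) (card V)" by simp
  have "Polynomial.degree (char_poly ?A) = card V" using degree_monic_char_poly[OF A] by simp
  then have "\<not> constant (poly (char_poly ?A))"
    using assms by (simp add: constant_degree card_gt_0_iff)
  then obtain c where "poly (char_poly ?A) c = 0" using fundamental_theorem_of_algebra by blast
  then have "eigenvalue ?A c" using eigenvalue_root_char_poly[OF A] by simp
  then show ?thesis
    by (auto simp: eigenvalue_on_reindex_iff[OF bij, symmetric] eigenvalue_on_lessThan_iff)
qed

text \<open>The Hermitian form \<open>x\<^sup>* M x\<close> of a real symmetric \<open>M\<close> is real, and equals \<open>c \<parallel>x\<parallel>\<^sup>2\<close>.\<close>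
lemma symmetric_complex_eigenvalue_real:
  fixes M :: "'v \<Rightarrow> 'v \<Rightarrow> real"
  assumes fin: "finite V" and sym: "\<And>u w. u \<in> V \<Longrightarrow> w \<in> V \<Longrightarrow> M u w = M w u"
    and ev: "eigenvalue_on V (\<lambda>u w. complex_of_real (M u w)) c"
  shows "Im c = 0"
proof -
  obtain x where x0: "\<exists>v\<in>V. x v \<noteq> 0"
    and xe: "\<forall>u\<in>V. (\<Sum>w\<in>V. complex_of_real (M u w) * x w) = c * x u"
    using ev unfolding eigenvalue_on_def by blast
  define s where "s = (\<Sum>u\<in>V. \<Sum>w\<in>V. cnj (x u) * (complex_of_real (M u w) * x w))"
  define N where "N = (\<Sum>u\<in>V. (cmod (x u))\<^sup>2)"
  have "s = (\<Sum>u\<in>V. cnj (x u) * (c * x u))"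
    unfolding s_def sum_distrib_left[symmetric] using xe by simp
  also have "\<dots> = c * complex_of_real N"
    unfolding N_def of_real_sum sum_distrib_left complex_norm_square by (simp add: mult_ac)
  finally have s: "s = c * complex_of_real N" .
  have "cnj s = (\<Sum>u\<in>V. \<Sum>w\<in>V. x u * (complex_of_real (M u w) * cnj (x w)))"
    unfolding s_def by simp
  also have "\<dots> = s"
    unfolding s_def by (subst sum.swap) (auto intro!: sum.cong simp: sym mult_ac)
  finally have "cnj s = s" .
  moreover obtain v where "v \<in> V" "x v \<noteq> 0" using x0 by blast
  then have "0 < N" unfolding N_def using fin by (intro sum_pos2[of V v]) auto
  moreover have "cnj s = cnj c * complex_of_real N" using s by simp
  ultimately have "cnj c = c" using s by simp
  then have "Im (cnj c) = Im c" by simp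
  then show ?thesis by simp
qed

lemma real_eigenvalue_on_of_complex:
  fixes M :: "'v \<Rightarrow> 'v \<Rightarrow> real"
  assumes ev: "eigenvalue_on V (\<lambda>u w. complex_of_real (M u w)) c" and real: "Im c = 0"
  shows "eigenvalue_on V M (Re c)"
proof -
  obtain x where x0: "\<exists>v\<in>V. x v \<noteq> 0"
    and xe: "\<forall>u\<in>V. (\<Sum>w\<in>V. complex_of_real (M u w) * x w) = c * x u"
    using ev unfolding eigenvalue_on_def by blast
  have re: "(\<Sum>w\<in>V. M u w * Re (x w)) = Re c * Re (x u)"
    and im: "(\<Sum>w\<in>V. M u w * Im (x w)) = Re c * Im (x u)" if "u \<in> V" for u
    using arg_cong[OF xe[rule_format, OF that], of Re] arg_cong[OF xe[rule_format, OF that], of Im]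
      real by simp_all
  obtain v where v: "v \<in> V" "x v \<noteq> 0" using x0 by blast
  then consider "Re (x v) \<noteq> 0" | "Im (x v) \<noteq> 0" using complex_eqI by fastforce
  then show ?thesis
    unfolding eigenvalue_on_def using v(1) re im by cases (rule exI, fastforce)+
qed

lemma symmetric_eigenvalue_on_exists:
  fixes M :: "'v \<Rightarrow> 'v \<Rightarrow> real"
  assumes "finite V" "V \<noteq> {}" and "\<And>u w. u \<in> V \<Longrightarrow> w \<in> V \<Longrightarrow> M u w = M w u"
  shows "\<exists>\<mu>. eigenvalue_on V M \<mu>"
proof -
  obtain c where c: "eigenvalue_on V (\<lambda>u w. complex_of_real (M u w)) c"
    using complex_eigenvalue_on_exists[OF assms(1,2)] by blast
  then have "Im c = 0" using symmetric_complex_eigenvalue_real[of V M c] assms by blast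
  then show ?thesis using real_eigenvalue_on_of_complex[OF c] by blast
qed

section \<open>\<open>Q\<close>-eigenvalues and the degree sum\<close>

lemma graphD:
  assumes "graph V E"
  shows "finite V" and "E u v \<Longrightarrow> u \<in> V" and "E u v \<Longrightarrow> v \<in> V" and "E u v \<Longrightarrow> u \<noteq> v"
    and "E u v \<Longrightarrow> E v u"
  using assms unfolding graph_def by blast+

lemma min_degree_le: "finite V \<Longrightarrow> x \<in> V \<Longrightarrow> min_degree V E \<le> Defs.degree V E x"
  unfolding min_degree_def by simp

lemma
  assumes "graph V E" "V \<noteq> {}"
  shows rho_Q_is_Q_eigenvalue: "Q_eigenvalue V E (rho_Q V E)"
    and Q_eigenvalue_le_rho_Q: "Q_eigenvalue V E \<mu> \<Longrightarrow> \<mu> \<le> rho_Q V E"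
proof -
  have "finite {\<mu>. Q_eigenvalue V E \<mu>}"
    using finite_eigenvalues_on graphD(1)[OF assms(1)] by (simp add: Q_eigenvalue_iff_eigenvalue_on)
  moreover have "\<exists>\<mu>. Q_eigenvalue V E \<mu>"
    using symmetric_eigenvalue_on_exists[OF graphD(1)[OF assms(1)] assms(2)] graphD(5)[OF assms(1)]
    by (auto simp: Q_eigenvalue_iff_eigenvalue_on signless_laplacian_def)
  ultimately show "Q_eigenvalue V E (rho_Q V E)" "Q_eigenvalue V E \<mu> \<Longrightarrow> \<mu> \<le> rho_Q V E"
    unfolding rho_Q_def using Max_in[of "Collect (Q_eigenvalue V E)"] by auto
qed

abbreviation neighbours :: "'a set \<Rightarrow> ('a \<Rightarrow> 'a \<Rightarrow> bool) \<Rightarrow> 'a \<Rightarrow> 'a set" where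
  "neighbours V E v \<equiv> {u \<in> V. E v u}"

abbreviation degree_sum :: "'a set \<Rightarrow> ('a \<Rightarrow> 'a \<Rightarrow> bool) \<Rightarrow> nat" where
  "degree_sum V E \<equiv> \<Sum>v\<in>V. Defs.degree V E v"

lemma degree_less_card:
  assumes "graph V E" "v \<in> V"
  shows "Defs.degree V E v < card V"
proof -
  have "neighbours V E v \<subseteq> V - {v}" using graphD(4)[OF assms(1)] by blast
  then have "Defs.degree V E v \<le> card (V - {v})"
    unfolding Defs.degree_def using graphD(1)[OF assms(1)] by (intro card_mono) auto
  also have "\<dots> < card V" by (rule card_Diff1_less[OF graphD(1)[OF assms(1)] assms(2)])
  finally show ?thesis .
qed

lemma signless_laplacian_row:
  assumes "finite V" "u \<in> V"
  shows "(\<Sum>w\<in>V. signless_laplacian V E u w * x w)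
       = real (Defs.degree V E u) * x u + (\<Sum>w\<in>neighbours V E u. x w)"
proof -
  have "(\<Sum>w\<in>V. signless_laplacian V E u w * x w)
      = (\<Sum>w\<in>V. if E u w then x w else 0) + (\<Sum>w\<in>V. if w = u then real (Defs.degree V E u) * x w else 0)"
    unfolding signless_laplacian_def sum.distrib[symmetric] by (intro sum.cong) (auto simp: algebra_simps)
  then show ?thesis using assms by (simp add: sum.inter_filter)
qed

text \<open>Look at a vertex maximising \<open>\<bar>x v\<bar> / d v\<close> for an eigenvector \<open>x\<close>.\<close>
lemma Q_eigenvalue_neighbour_degree_bound:
  fixes \<mu> :: real
  assumes g: "graph V E" and dpos: "\<forall>v\<in>V. 0 < Defs.degree V E v" and ev: "Q_eigenvalue V E \<mu>"
  shows "\<exists>v\<in>V. \<bar>\<mu>\<bar> * Defs.degree V E v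
           \<le> real (Defs.degree V E v) * Defs.degree V E v + (\<Sum>w\<in>neighbours V E v. real (Defs.degree V E w))"
proof -
  have fin: "finite V" using graphD(1)[OF g] .
  obtain x where x0: "\<exists>v\<in>V. x v \<noteq> 0"
    and xe: "\<forall>u\<in>V. (\<Sum>w\<in>V. signless_laplacian V E u w * x w) = \<mu> * x u"
    using ev unfolding Q_eigenvalue_def by blast
  define d where "d v = real (Defs.degree V E v)" for v
  have dp: "\<And>v. v \<in> V \<Longrightarrow> 0 < d v" using dpos by (simp add: d_def)
  define M where "M = Max ((\<lambda>v. \<bar>x v\<bar> / d v) ` V)"
  have xu: "\<bar>x u\<bar> \<le> M * d u" if "u \<in> V" for u
  proof -
    have "\<bar>x u\<bar> / d u \<le> M" unfolding M_def using fin that by (intro Max_ge) auto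
    then show ?thesis using dp[OF that] by (simp add: divide_le_eq)
  qed
  obtain v where vV: "v \<in> V" and xv: "\<bar>x v\<bar> = M * d v"
  proof -
    have "M \<in> (\<lambda>v. \<bar>x v\<bar> / d v) ` V" unfolding M_def using fin x0 by (intro Max_in) auto
    then show ?thesis using dp that by (force simp: divide_eq_eq)
  qed
  obtain w where w: "w \<in> V" "x w \<noteq> 0" using x0 by blast
  then have "0 < M * d w" using xu[OF w(1)] by (meson less_le_trans zero_less_abs_iff)
  then have Mp: "0 < M" using dp[OF w(1)] by (simp add: zero_less_mult_iff)
  have "\<mu> * x v = d v * x v + (\<Sum>w\<in>neighbours V E v. x w)"
    using xe vV signless_laplacian_row[OF fin vV, of E x] by (simp add: d_def)
  then have "\<bar>\<mu>\<bar> * (M * d v) = \<bar>d v * x v + (\<Sum>w\<in>neighbours V E v. x w)\<bar>"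
    using xv by (metis abs_mult)
  also have "\<dots> \<le> \<bar>d v * x v\<bar> + \<bar>\<Sum>w\<in>neighbours V E v. x w\<bar>" by (rule abs_triangle_ineq)
  also have "\<dots> \<le> d v * \<bar>x v\<bar> + (\<Sum>w\<in>neighbours V E v. \<bar>x w\<bar>)"
    using dp[OF vV] by (intro add_mono) (auto simp: abs_mult)
  also have "\<dots> \<le> d v * (M * d v) + (\<Sum>w\<in>neighbours V E v. M * d w)"
    using xv xu by (intro add_mono sum_mono) auto
  finally have "M * (\<bar>\<mu>\<bar> * d v) \<le> M * (d v * d v + (\<Sum>w\<in>neighbours V E v. d w))"
    by (simp add: sum_distrib_left algebra_simps)
  then show ?thesis using Mp vV unfolding d_def by (auto simp: mult_le_cancel_left_pos)
qed

lemma neighbour_degree_sum_le: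
  assumes "graph V E"
  shows "(\<Sum>w\<in>neighbours V E v. real (Defs.degree V E w)) \<le> Defs.degree V E v * (real (card V) - 1)"
proof -
  have "\<forall>w\<in>neighbours V E v. real (Defs.degree V E w) \<le> real (card V) - 1"
  proof
    fix w assume "w \<in> neighbours V E v"
    then have "Defs.degree V E w < card V" using degree_less_card[OF assms] by simp
    then show "real (Defs.degree V E w) \<le> real (card V) - 1" by (simp flip: of_nat_less_iff)
  qed
  then show ?thesis
    using sum_bounded_above[of "neighbours V E v" "\<lambda>w. real (Defs.degree V E w)" "real (card V) - 1"]
    by (simp add: Defs.degree_def)
qed

lemma neighbour_degree_sum_le_degree_sum:
  assumes g: "graph V E" and v: "v \<in> V" and dmin: "\<forall>x\<in>V. \<delta> \<le> Defs.degree V E x"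
  shows "(\<Sum>w\<in>neighbours V E v. real (Defs.degree V E w)) + Defs.degree V E v
           + (real (card V) - 1 - Defs.degree V E v) * \<delta> \<le> degree_sum V E"
proof -
  define N where "N = neighbours V E v"
  define R where "R = V - N - {v}"
  have fin: "finite N" "finite R" using graphD(1)[OF g] by (auto simp: N_def R_def)
  have vN: "v \<notin> N" using graphD(4)[OF g] by (auto simp: N_def)
  have V: "V = insert v (N \<union> R)" and NR: "N \<inter> R = {}" using v by (auto simp: N_def R_def)
  have "card V = 1 + Defs.degree V E v + card R"
    using fin vN NR by (subst V) (simp add: card_Un_disjoint R_def N_def Defs.degree_def)
  moreover have "real (card R) * \<delta> \<le> (\<Sum>w\<in>R. real (Defs.degree V E w))"
    using sum_bounded_below[of R "real \<delta>"] dmin by (auto simp: R_def)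
  moreover have "real (degree_sum V E) = Defs.degree V E v
      + (\<Sum>w\<in>N. real (Defs.degree V E w)) + (\<Sum>w\<in>R. real (Defs.degree V E w))"
    using fin vN NR by (subst V) (simp add: sum.union_disjoint R_def)
  ultimately show ?thesis unfolding N_def[symmetric] by simp
qed

lemma degree_sq_add_neighbour_sum_le:
  fixes n d \<delta> SN S :: real
  assumes "0 < d" "d \<le> n - 1" "1 \<le> \<delta>" "SN \<le> d * (n - 1)" "SN + d + (n - 1 - d) * \<delta> \<le> S"
    and "S \<le> (n - 1) * (n - 2 * \<delta> + 2)"
  shows "d * d + SN \<le> 2 * (n - \<delta>) * d"
proof (cases "d \<le> n - 2 * \<delta> + 1")
  case True
  then have "d * (d + n - 1) \<le> d * (2 * (n - \<delta>))" using assms(1) by (intro mult_left_mono) auto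
  then show ?thesis using assms(4) by (simp add: algebra_simps)
next
  case False
  then have "(d - (n - 1)) * (d - (n - 3 * \<delta> + 2)) \<le> 0"
    using assms(2,3) by (intro mult_nonpos_nonneg) auto
  then show ?thesis using assms(5,6) by (simp add: algebra_simps)
qed

lemma Q_eigenvalue_le_if_degree_sum_le:
  fixes \<mu> :: real
  assumes g: "graph V E" and dmin: "\<forall>x\<in>V. \<delta> \<le> Defs.degree V E x" and "1 \<le> \<delta>"
    and S: "degree_sum V E \<le> (real (card V) - 1) * (real (card V) - 2 * \<delta> + 2)"
    and ev: "Q_eigenvalue V E \<mu>"
  shows "\<mu> \<le> 2 * (real (card V) - \<delta>)"
proof -
  have dpos: "\<forall>v\<in>V. 0 < Defs.degree V E v" using dmin \<open>1 \<le> \<delta>\<close> by fastforce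
  obtain v where v: "v \<in> V" and h: "\<bar>\<mu>\<bar> * Defs.degree V E v
      \<le> real (Defs.degree V E v) * Defs.degree V E v + (\<Sum>w\<in>neighbours V E v. real (Defs.degree V E w))"
    using Q_eigenvalue_neighbour_degree_bound[OF g dpos ev] by blast
  have pos: "0 < real (Defs.degree V E v)" using dpos v by simp
  have le: "real (Defs.degree V E v) \<le> real (card V) - 1"
    using degree_less_card[OF g v] by (simp flip: of_nat_less_iff)
  have "real (Defs.degree V E v) * Defs.degree V E v + (\<Sum>w\<in>neighbours V E v. real (Defs.degree V E w))
      \<le> 2 * (real (card V) - \<delta>) * Defs.degree V E v"
    using \<open>1 \<le> \<delta>\<close> by (intro degree_sq_add_neighbour_sum_le[OF pos le _ neighbour_degree_sum_le[OF g]
        neighbour_degree_sum_le_degree_sum[OF g v dmin] S]) simp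
  with h have "\<bar>\<mu>\<bar> * Defs.degree V E v \<le> 2 * (real (card V) - \<delta>) * Defs.degree V E v" by linarith
  then show ?thesis using pos by (simp add: mult_le_cancel_right_pos)
qed

section \<open>The extremal graph\<close>

lemma graph_extremal: "graph (extremal_V n) (extremal_E n d)"
  unfolding graph_def extremal_V_def extremal_E_def by auto

lemma extremal_neighbours:
  assumes "i < n" "1 \<le> d" "2 * d \<le> n"
  shows "neighbours (extremal_V n) (extremal_E n d) i =
    (if i < d then {0..<n} - {i} else if i < n - d + 1 then {0..<n - d + 1} - {i} else {0..<d})"
  using assms unfolding extremal_V_def extremal_E_def by auto

text \<open>An eigenvector taking the values \<open>1\<close>, \<open>q\<close>, \<open>r\<close> on the blocks \<open>K\<^sub>d\<close>,
  \<open>K\<^sub>n\<^sub>-\<^sub>2\<^sub>d\<^sub>+\<^sub>1\<close> and \<open>(d - 1)K\<^sub>1\<close>.\<close>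
lemma extremal_block_eigenvector:
  fixes n d :: nat and \<mu> q r :: real
  assumes d1: "1 \<le> d" and nd: "2 * d \<le> n"
    and eq1: "\<mu> - real n - real d + 2 = (real n - 2 * real d + 1) * q + (real d - 1) * r"
    and eq2: "(\<mu> - 2 * real n + 3 * real d) * q = real d" and eq3: "(\<mu> - real d) * r = real d"
  shows "Q_eigenvalue (extremal_V n) (extremal_E n d) \<mu>"
proof -
  define m where "m = n - d + 1"
  have mn: "d \<le> m" "m \<le> n" "real m = real n - real d + 1" using nd d1 by (auto simp: m_def)
  define x where "x j = (if j < d then 1 else if j < m then q else r)" for j
  have sd: "(\<Sum>j<d. x j) = real d" by (simp add: x_def)
  have sm: "(\<Sum>j<m. x j) = real d + real (m - d) * q"
    using sum.atLeastLessThan_concat[of 0 d m x] mn sd by (simp add: x_def atLeast0LessThan)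
  have sn: "(\<Sum>j<n. x j) = real d + real (m - d) * q + real (n - m) * r"
    using sum.atLeastLessThan_concat[of 0 m n x] mn sm by (simp add: x_def atLeast0LessThan)
  have "(\<Sum>w\<in>extremal_V n. signless_laplacian (extremal_V n) (extremal_E n d) i w * x w) = \<mu> * x i"
    if i: "i \<in> extremal_V n" for i
  proof -
    have iN: "i < n" using i by (simp add: extremal_V_def)
    have row: "(\<Sum>w\<in>extremal_V n. signless_laplacian (extremal_V n) (extremal_E n d) i w * x w)
       = real (card (neighbours (extremal_V n) (extremal_E n d) i)) * x i
         + (\<Sum>w\<in>neighbours (extremal_V n) (extremal_E n d) i. x w)"
      using signless_laplacian_row[OF _ i] by (simp add: extremal_V_def Defs.degree_def)
    consider "i < d" | "d \<le> i" "i < m" | "m \<le> i" by linarith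
    then show ?thesis
    proof cases
      case 1
      then show ?thesis
        using row extremal_neighbours[OF iN d1 nd] sum.remove[of "{..<n}" i x] iN sn eq1 mn
        by (simp add: x_def m_def lessThan_atLeast0 algebra_simps)
    next
      case 2
      then show ?thesis
        using row extremal_neighbours[OF iN d1 nd] sum.remove[of "{..<m}" i x] sm eq2 mn
        by (simp add: x_def m_def lessThan_atLeast0 algebra_simps)
    next
      case 3
      then show ?thesis
        using row extremal_neighbours[OF iN d1 nd] sd eq3 mn
        by (simp add: x_def m_def lessThan_atLeast0 algebra_simps)
    qed
  qed
  moreover have "0 \<in> extremal_V n" "x 0 \<noteq> 0" using nd d1 by (simp_all add: extremal_V_def x_def)
  ultimately show ?thesis unfolding Q_eigenvalue_def by blast
qed

text \<open>The equations of the previous lemma with \<open>q\<close> and \<open>r\<close> eliminated.\<close>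
lemma extremal_secular_equation_root:
  fixes n d :: nat
  assumes "2 \<le> d" "2 * d \<le> n"
  shows "\<exists>\<mu>. 2 * real n - 2 * real d < \<mu> \<and>
     \<mu> - real n - real d + 2 = (real n - 2 * real d + 1) * (real d / (\<mu> - 2 * real n + 3 * real d))
        + (real d - 1) * (real d / (\<mu> - real d))"
proof -
  define g where "g = (\<lambda>\<mu>. \<mu> - real n - real d + 2
     - (real n - 2 * real d + 1) * (real d / (\<mu> - 2 * real n + 3 * real d))
     - (real d - 1) * (real d / (\<mu> - real d)))"
  define a where "a = 2 * real n - 2 * real d"
  have dR: "2 \<le> real d" "2 * real d \<le> real n" using assms by simp_all
  have "continuous_on {a..2 * real n} g"
    unfolding g_def using dR by (intro continuous_intros) (auto simp: a_def)
  moreover have "g a < 0"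
  proof -
    define T where "T = (real d - 1) * (real d / (a - real d))"
    have "real d / (a - 2 * real n + 3 * real d) = 1" using dR by (simp add: a_def)
    then have "g a = 1 - real d - T" unfolding g_def T_def by (simp add: a_def)
    moreover have "0 < T" unfolding T_def using dR by (intro mult_pos_pos divide_pos_pos) (auto simp: a_def)
    ultimately show ?thesis using dR by simp
  qed
  moreover have "0 < g (2 * real n)"
  proof -
    define T where "T = (real d - 1) * (real d / (2 * real n - real d))"
    have "real d / (2 * real n - 2 * real n + 3 * real d) = 1 / 3" using dR by simp
    then have "g (2 * real n) = real n - real d + 2 - (real n - 2 * real d + 1) / 3 - T"
      unfolding g_def T_def by simp
    moreover have "T \<le> real d - 1"
      unfolding T_def using dR by (intro mult_left_le) (auto simp: divide_le_eq)
    ultimately show ?thesis using dR by argo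
  qed
  ultimately obtain \<mu> where "a \<le> \<mu>" "g \<mu> = 0"
    using IVT'[of g a 0 "2 * real n"] dR by (force simp: a_def)
  moreover from calculation have "\<mu> \<noteq> a" using \<open>g a < 0\<close> by auto
  ultimately show ?thesis unfolding g_def a_def by (intro exI[of _ \<mu>]) auto
qed

lemma extremal_Q_eigenvalue_gt:
  fixes n d :: nat
  assumes d2: "2 \<le> d" and nd: "2 * d \<le> n"
  shows "\<exists>\<mu>. 2 * real n - 2 * real d < \<mu> \<and> Q_eigenvalue (extremal_V n) (extremal_E n d) \<mu>"
proof -
  obtain \<mu> where mu: "2 * real n - 2 * real d < \<mu>" and root: "\<mu> - real n - real d + 2 =
       (real n - 2 * real d + 1) * (real d / (\<mu> - 2 * real n + 3 * real d))
        + (real d - 1) * (real d / (\<mu> - real d))"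
    using extremal_secular_equation_root[OF d2 nd] by blast
  have "\<mu> - 2 * real n + 3 * real d \<noteq> 0" "\<mu> - real d \<noteq> 0" using mu d2 nd by simp_all
  then have "Q_eigenvalue (extremal_V n) (extremal_E n d) \<mu>"
    using d2 nd root
    by (intro extremal_block_eigenvector[where q = "real d / (\<mu> - 2 * real n + 3 * real d)"
          and r = "real d / (\<mu> - real d)"]) simp_all
  with mu show ?thesis by blast
qed

section \<open>Parity joins\<close>

definition parity_join :: "'a set \<Rightarrow> ('a \<Rightarrow> 'a \<Rightarrow> bool) \<Rightarrow> ('a \<Rightarrow> 'a \<Rightarrow> bool) \<Rightarrow> bool" where
  "parity_join V E J \<longleftrightarrow> (\<forall>x y. J x y \<longrightarrow> E x y) \<and> (\<forall>x y. J x y \<longrightarrow> J y x) \<and>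
     (\<forall>x\<in>V. even (Defs.degree V J x) = even (Defs.degree V E x))"

definition saturated :: "'a set \<Rightarrow> ('a \<Rightarrow> 'a \<Rightarrow> bool) \<Rightarrow> ('a \<Rightarrow> 'a \<Rightarrow> bool) \<Rightarrow> 'a \<Rightarrow> bool" where
  "saturated V E J x \<longleftrightarrow> x \<in> V \<and> (\<forall>y\<in>V. E x y \<longrightarrow> J x y)"

text \<open>Lexicographic in the size of the join and the number of saturated vertices,
  since the latter is at most \<open>card V\<close>.\<close>
definition join_cost :: "'a set \<Rightarrow> ('a \<Rightarrow> 'a \<Rightarrow> bool) \<Rightarrow> ('a \<Rightarrow> 'a \<Rightarrow> bool) \<Rightarrow> nat" where
  "join_cost V E J = degree_sum V J * (card V + 1) + card {x\<in>V. saturated V E J x}"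

definition optimal_join :: "'a set \<Rightarrow> ('a \<Rightarrow> 'a \<Rightarrow> bool) \<Rightarrow> ('a \<Rightarrow> 'a \<Rightarrow> bool) \<Rightarrow> bool" where
  "optimal_join V E J \<longleftrightarrow> parity_join V E J \<and>
     (\<forall>J'. parity_join V E J' \<longrightarrow> join_cost V E J \<le> join_cost V E J')"

definition edge_symdiff :: "('a \<Rightarrow> 'a \<Rightarrow> bool) \<Rightarrow> ('a \<Rightarrow> 'a \<Rightarrow> bool) \<Rightarrow> 'a \<Rightarrow> 'a \<Rightarrow> bool" where
  "edge_symdiff J C = (\<lambda>x y. J x y \<noteq> C x y)"

definition edges_of :: "('a \<times> 'a) list \<Rightarrow> 'a \<Rightarrow> 'a \<Rightarrow> bool" where
  "edges_of ps = (\<lambda>x y. (x, y) \<in> set ps \<or> (y, x) \<in> set ps)"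

lemma parity_joinD:
  assumes "parity_join V E J"
  shows "J x y \<Longrightarrow> E x y" and "J x y \<Longrightarrow> J y x"
    and "x \<in> V \<Longrightarrow> even (Defs.degree V J x) = even (Defs.degree V E x)"
  using assms unfolding parity_join_def by auto

lemma saturatedD: "saturated V E J x \<Longrightarrow> y \<in> V \<Longrightarrow> E x y \<Longrightarrow> J x y"
  unfolding saturated_def by blast

lemma saturated_edge_in_join:
  assumes "graph V E" "parity_join V E J" "saturated V E J v" "E v u"
  shows "J v u" and "J u v"
  using saturatedD[OF assms(3)] graphD(3)[OF assms(1)] parity_joinD(2)[OF assms(2)] assms(4) by blast+

lemma optimal_join_parity_join: "optimal_join V E J \<Longrightarrow> parity_join V E J"
  unfolding optimal_join_def by simp

lemma degree_ge_card:
  assumes "finite V" "S \<subseteq> neighbours V X x"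
  shows "card S \<le> Defs.degree V X x"
  unfolding Defs.degree_def using assms by (intro card_mono) auto

lemma degree_edge_symdiff:
  assumes "finite V"
  shows "Defs.degree V (edge_symdiff J C) x + 2 * Defs.degree V (\<lambda>x y. J x y \<and> C x y) x
         = Defs.degree V J x + Defs.degree V C x"
proof -
  let ?A = "neighbours V J x" and ?B = "neighbours V C x"
  have fin: "finite ?A" "finite ?B" using assms by auto
  have "neighbours V (edge_symdiff J C) x = (?A - ?B) \<union> (?B - ?A)" by (auto simp: edge_symdiff_def)
  moreover have "card ((?A - ?B) \<union> (?B - ?A)) = card (?A - ?B) + card (?B - ?A)"
    using fin by (intro card_Un_disjoint) auto
  moreover have "{y\<in>V. J x y \<and> C x y} = ?A \<inter> ?B" by auto
  moreover have "card ?A = card (?A \<inter> ?B) + card (?A - ?B)" "card ?B = card (?A \<inter> ?B) + card (?B - ?A)"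
    using card_Int_Diff[OF fin(1), of ?B] card_Int_Diff[OF fin(2), of ?A] by (simp_all add: Int_commute)
  ultimately show ?thesis unfolding Defs.degree_def by simp
qed

lemma degree_sum_edge_symdiff:
  assumes "finite V"
  shows "degree_sum V (edge_symdiff J C) + 2 * degree_sum V (\<lambda>x y. J x y \<and> C x y)
       = degree_sum V J + degree_sum V C"
  unfolding sum_distrib_left sum.distrib[symmetric] using degree_edge_symdiff[OF assms]
  by (intro sum.cong) auto

lemma parity_join_edge_symdiff:
  assumes fin: "finite V" and J: "parity_join V E J"
    and C: "\<forall>x y. C x y \<longrightarrow> E x y" "\<forall>x y. C x y \<longrightarrow> C y x" "\<forall>x\<in>V. even (Defs.degree V C x)"
  shows "parity_join V E (edge_symdiff J C)"
proof -
  have "even (Defs.degree V (edge_symdiff J C) x) = even (Defs.degree V E x)" if "x \<in> V" for x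
  proof -
    have "even (Defs.degree V (edge_symdiff J C) x) = even (Defs.degree V J x + Defs.degree V C x)"
      by (simp flip: degree_edge_symdiff[OF fin])
    then show ?thesis using C(3) J that unfolding parity_join_def by simp
  qed
  then show ?thesis using J C(1,2) unfolding parity_join_def edge_symdiff_def by blast
qed

lemma join_cost_less:
  assumes "finite V" "degree_sum V J' < degree_sum V J"
  shows "join_cost V E J' < join_cost V E J"
proof -
  have "card {x\<in>V. saturated V E J' x} \<le> card V" using assms(1) by (intro card_mono) auto
  then have "join_cost V E J' < (degree_sum V J' + 1) * (card V + 1)" unfolding join_cost_def by simp
  also have "\<dots> \<le> join_cost V E J" using assms(2) unfolding join_cost_def
    by (metis Suc_eq_plus1 Suc_leI mult_le_mono1 trans_le_add1)
  finally show ?thesis .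
qed

lemma optimal_join_exists:
  assumes "graph V E"
  obtains J where "optimal_join V E J"
proof -
  have "parity_join V E E" using graphD(5)[OF assms] unfolding parity_join_def by blast
  then obtain J where J: "parity_join V E J"
    and min: "\<And>J'. parity_join V E J' \<Longrightarrow> join_cost V E J \<le> join_cost V E J'"
    using ex_has_least_nat[of "parity_join V E" E "join_cost V E"] by blast
  then show ?thesis using that unfolding optimal_join_def by blast
qed

text \<open>The edges outside a parity join form an even subgraph.\<close>
lemma has_even_factor_if_unsaturated_join:
  assumes g: "graph V E" and J: "parity_join V E J" and unsat: "\<forall>v\<in>V. \<not> saturated V E J v"
  shows "has_even_factor V E"
proof -
  define F where "F = (\<lambda>x y. E x y \<and> \<not> J x y)"
  have "Defs.degree V F v \<noteq> 0 \<and> even (Defs.degree V F v)" if v: "v \<in> V" for v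
  proof -
    have sub: "neighbours V J v \<subseteq> neighbours V E v" using parity_joinD(1)[OF J] by auto
    have "neighbours V F v = neighbours V E v - neighbours V J v" by (auto simp: F_def)
    then have dF: "Defs.degree V F v = Defs.degree V E v - Defs.degree V J v"
      unfolding Defs.degree_def using sub graphD(1)[OF g] by (simp add: card_Diff_subset)
    have "Defs.degree V J v \<le> Defs.degree V E v"
      unfolding Defs.degree_def using sub graphD(1)[OF g] by (simp add: card_mono)
    moreover have "even (Defs.degree V J v) = even (Defs.degree V E v)" using parity_joinD(3)[OF J v] .
    ultimately have "even (Defs.degree V F v)" unfolding dF by auto
    moreover obtain y where "y \<in> V" "E v y" "\<not> J v y" using unsat v unfolding saturated_def by auto
    then have "Defs.degree V F v \<noteq> 0" unfolding Defs.degree_def F_def using graphD(1)[OF g] by auto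
    ultimately show ?thesis by simp
  qed
  moreover have "F u v \<Longrightarrow> F v u" for u v
    using graphD(5)[OF g, of u v] parity_joinD(2)[OF J, of v u] unfolding F_def by blast
  moreover have "F u v \<Longrightarrow> E u v" for u v unfolding F_def by simp
  ultimately show ?thesis unfolding has_even_factor_def by blast
qed

text \<open>Otherwise switching along \<open>C\<close> would give a smaller parity join.\<close>
lemma optimal_join_meets_even_subgraph:
  assumes fin: "finite V" and J: "optimal_join V E J"
    and C: "\<forall>x y. C x y \<longrightarrow> E x y" "\<forall>x y. C x y \<longrightarrow> C y x" "\<forall>x\<in>V. even (Defs.degree V C x)"
  shows "2 * degree_sum V (\<lambda>x y. J x y \<and> C x y) \<le> degree_sum V C"
proof (rule ccontr)
  assume "\<not> ?thesis"
  then have "degree_sum V (edge_symdiff J C) < degree_sum V J"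
    using degree_sum_edge_symdiff[OF fin, of J C] by linarith
  then have "join_cost V E (edge_symdiff J C) < join_cost V E J" by (rule join_cost_less[OF fin])
  moreover have "parity_join V E (edge_symdiff J C)"
    using parity_join_edge_symdiff[OF fin optimal_join_parity_join[OF J] C] .
  ultimately show False using J unfolding optimal_join_def by (meson not_le)
qed

lemma sum_if_mem_eq_card:
  assumes "finite V" "S \<subseteq> V"
  shows "(\<Sum>x\<in>V. if x \<in> S then c else 0) = card S * (c::nat)"
  using assms by (simp add: sum.If_cases Int_absorb1)

lemma degree_triangle:
  assumes "{v, a, b} \<subseteq> V" "distinct [v, a, b]"
  shows "Defs.degree V (edges_of [(v, a), (a, b), (b, v)]) x = (if x \<in> {v, a, b} then 2 else 0)"
proof -
  have "neighbours V (edges_of [(v, a), (a, b), (b, v)]) x = (if x \<in> {v, a, b} then {v, a, b} - {x} else {})"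
    using assms by (auto simp: edges_of_def)
  then show ?thesis using assms by (auto simp: Defs.degree_def)
qed

lemma degree_square:
  assumes "{v, u, z, w} \<subseteq> V" "distinct [v, u, z, w]"
  shows "Defs.degree V (edges_of [(v, u), (u, z), (z, w), (w, v)]) x = (if x \<in> {v, u, z, w} then 2 else 0)"
proof -
  have "neighbours V (edges_of [(v, u), (u, z), (z, w), (w, v)]) x =
     (if x = v \<or> x = z then {u, w} else if x = u \<or> x = w then {v, z} else {})"
    using assms by (auto simp: edges_of_def)
  then show ?thesis using assms by (auto simp: Defs.degree_def)
qed

lemma saturated_neighbours_independent:
  assumes g: "graph V E" and J: "optimal_join V E J" and sat: "saturated V E J v"
    and va: "E v a" and vb: "E v b"
  shows "\<not> E a b"
proof
  assume ab: "E a b"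
  let ?T = "edges_of [(v, a), (a, b), (b, v)]"
  have fin: "finite V" using graphD(1)[OF g] .
  have V: "{v, a, b} \<subseteq> V" and d: "distinct [v, a, b]" using va vb ab graphD[OF g] by auto
  have Ja: "J v a" "J a v" and Jb: "J v b" "J b v"
    using saturated_edge_in_join[OF g optimal_join_parity_join[OF J] sat] va vb by blast+
  have "2 * degree_sum V (\<lambda>x y. J x y \<and> ?T x y) \<le> degree_sum V ?T"
    using va vb ab graphD(5)[OF g] degree_triangle[OF V d]
    by (intro optimal_join_meets_even_subgraph[OF fin J]) (auto simp: edges_of_def)
  also have "\<dots> = 6" using degree_triangle[OF V d] sum_if_mem_eq_card[OF fin V] d by simp
  finally have "degree_sum V (\<lambda>x y. J x y \<and> ?T x y) \<le> 3" by simp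
  moreover have "2 \<le> Defs.degree V (\<lambda>x y. J x y \<and> ?T x y) v"
    "1 \<le> Defs.degree V (\<lambda>x y. J x y \<and> ?T x y) a" "1 \<le> Defs.degree V (\<lambda>x y. J x y \<and> ?T x y) b"
    using degree_ge_card[OF fin, of "{a, b}" "\<lambda>x y. J x y \<and> ?T x y" v]
      degree_ge_card[OF fin, of "{v}" "\<lambda>x y. J x y \<and> ?T x y" a]
      degree_ge_card[OF fin, of "{v}" "\<lambda>x y. J x y \<and> ?T x y" b] V d Ja Jb by (auto simp: edges_of_def)
  moreover have "(\<Sum>x\<in>{v, a, b}. Defs.degree V (\<lambda>x y. J x y \<and> ?T x y) x)
      \<le> degree_sum V (\<lambda>x y. J x y \<and> ?T x y)" using fin V by (intro sum_mono2) auto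
  ultimately show False using d by simp
qed

lemma square_even_subgraph:
  assumes g: "graph V E" and E: "E v u" "E v w" "E u z" "E w z" and "u \<noteq> w" "z \<noteq> v"
  defines "C \<equiv> edges_of [(v, u), (u, z), (z, w), (w, v)]"
  shows "{v, u, z, w} \<subseteq> V" and "distinct [v, u, z, w]"
    and "\<forall>x y. C x y \<longrightarrow> E x y" and "\<forall>x y. C x y \<longrightarrow> C y x" and "\<forall>x\<in>V. even (Defs.degree V C x)"
    and "degree_sum V C = 8"
proof -
  show V: "{v, u, z, w} \<subseteq> V" and d: "distinct [v, u, z, w]" using E assms(6,7) graphD[OF g] by auto
  show "\<forall>x y. C x y \<longrightarrow> E x y" "\<forall>x y. C x y \<longrightarrow> C y x"
    using E graphD(5)[OF g] by (auto simp: C_def edges_of_def)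
  show "\<forall>x\<in>V. even (Defs.degree V C x)" using degree_square[OF V d] by (simp add: C_def)
  show "degree_sum V C = 8"
    using degree_square[OF V d] sum_if_mem_eq_card[OF graphD(1)[OF g] V] d by (simp add: C_def)
qed

lemma optimal_join_square_not_in_join:
  assumes g: "graph V E" and J: "optimal_join V E J" and sat: "saturated V E J v"
    and E: "E v u" "E v w" "E u z" "E w z" and uw: "u \<noteq> w" and zv: "z \<noteq> v"
  shows "\<not> J u z"
proof
  assume Juz: "J u z"
  let ?C = "edges_of [(v, u), (u, z), (z, w), (w, v)]"
  let ?I = "\<lambda>x y. J x y \<and> ?C x y"
  note C = square_even_subgraph[OF g E uw zv]
  have fin: "finite V" using graphD(1)[OF g] .
  have Jv: "J v u" "J u v" "J v w" "J w v" "J z u"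
    using saturated_edge_in_join[OF g optimal_join_parity_join[OF J] sat] E(1,2) Juz
      parity_joinD(2)[OF optimal_join_parity_join[OF J]] by blast+
  have "2 * degree_sum V ?I \<le> 8" using optimal_join_meets_even_subgraph[OF fin J C(3-5)] C(6) by simp
  moreover have "2 \<le> Defs.degree V ?I v" "2 \<le> Defs.degree V ?I u" "1 \<le> Defs.degree V ?I z"
    "1 \<le> Defs.degree V ?I w"
    using degree_ge_card[OF fin, of "{u, w}" ?I v] degree_ge_card[OF fin, of "{v, z}" ?I u]
      degree_ge_card[OF fin, of "{u}" ?I z] degree_ge_card[OF fin, of "{v}" ?I w] C(1,2) Jv Juz
    by (auto simp: edges_of_def)
  moreover have "(\<Sum>x\<in>{v, u, z, w}. Defs.degree V ?I x) \<le> degree_sum V ?I"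
    using fin C(1) by (intro sum_mono2) auto
  ultimately show False using C(2) by simp
qed

lemma saturated_edge_symdiff_square:
  assumes g: "graph V E" and J: "optimal_join V E J" and sat: "saturated V E J v"
    and E: "E v u" "E v w" "E u z" "E w z" and uw: "u \<noteq> w" and zv: "z \<noteq> v"
    and x: "saturated V E (edge_symdiff J (edges_of [(v, u), (u, z), (z, w), (w, v)])) x"
  shows "x \<notin> {v, u, w}" and "x \<noteq> z \<Longrightarrow> saturated V E J x"
proof -
  note C = square_even_subgraph[OF g E uw zv]
  have "J v u" "J u v" "J v w" "J w v"
    using saturated_edge_in_join[OF g optimal_join_parity_join[OF J] sat] E(1,2) by blast+
  then show "x \<notin> {v, u, w}"
    using x E C(1,2) graphD(5)[OF g] unfolding saturated_def edge_symdiff_def edges_of_def by fastforce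
  then show "saturated V E J x" if "x \<noteq> z"
    using x that unfolding saturated_def edge_symdiff_def edges_of_def by auto
qed

lemma degree_sum_square_switch_le:
  assumes g: "graph V E" and J: "optimal_join V E J" and sat: "saturated V E J v"
    and E: "E v u" "E v w" "E u z" "E w z" and uw: "u \<noteq> w" and zv: "z \<noteq> v"
  shows "degree_sum V (edge_symdiff J (edges_of [(v, u), (u, z), (z, w), (w, v)])) \<le> degree_sum V J"
proof -
  let ?C = "edges_of [(v, u), (u, z), (z, w), (w, v)]"
  let ?I = "\<lambda>x y. J x y \<and> ?C x y"
  note C = square_even_subgraph[OF g E uw zv]
  have fin: "finite V" using graphD(1)[OF g] .
  have "J v u" "J v w" "J u v" "J w v"
    using saturated_edge_in_join[OF g optimal_join_parity_join[OF J] sat] E(1,2) by blast+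
  then have "2 \<le> Defs.degree V ?I v" "1 \<le> Defs.degree V ?I u" "1 \<le> Defs.degree V ?I w"
    using degree_ge_card[OF fin, of "{u, w}" ?I v] degree_ge_card[OF fin, of "{v}" ?I u]
      degree_ge_card[OF fin, of "{v}" ?I w] C(1,2) by (auto simp: edges_of_def)
  moreover have "(\<Sum>x\<in>{v, u, w}. Defs.degree V ?I x) \<le> degree_sum V ?I"
    using fin C(1) by (intro sum_mono2) auto
  ultimately show ?thesis using degree_sum_edge_symdiff[OF fin, of J ?C] C(2,6) by simp
qed

text \<open>Switching along the 4-cycle does not enlarge the join and unsaturates \<open>v\<close>; by
  optimality it must saturate \<open>z\<close> instead.\<close>
lemma optimal_join_square_switch:
  assumes g: "graph V E" and J: "optimal_join V E J" and sat: "saturated V E J v"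
    and E: "E v u" "E v w" "E u z" "E w z" and uw: "u \<noteq> w" and zv: "z \<noteq> v"
  defines "J' \<equiv> edge_symdiff J (edges_of [(v, u), (u, z), (z, w), (w, v)])"
  shows "optimal_join V E J'" and "saturated V E J' z"
proof -
  let ?S = "\<lambda>J. {x\<in>V. saturated V E J x}"
  note C = square_even_subgraph[OF g E uw zv]
  have fin: "finite V" using graphD(1)[OF g] .
  have J': "parity_join V E J'"
    unfolding J'_def by (rule parity_join_edge_symdiff[OF fin optimal_join_parity_join[OF J] C(3-5)])
  have size: "degree_sum V J' \<le> degree_sum V J"
    unfolding J'_def by (rule degree_sum_square_switch_le[OF g J sat E uw zv])
  have v: "v \<in> ?S J" using sat unfolding saturated_def by simp
  have sub: "?S J' \<subseteq> (?S J - {v}) \<union> {z}"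
    using saturated_edge_symdiff_square[OF g J sat E uw zv] unfolding J'_def by blast
  have cost: "join_cost V E J \<le> join_cost V E J'" using J J' unfolding optimal_join_def by simp
  show "saturated V E J' z"
  proof (rule ccontr)
    assume "\<not> saturated V E J' z"
    then have "?S J' \<subset> ?S J" using sub v by blast
    then have "card (?S J') < card (?S J)" using fin by (intro psubset_card_mono) auto
    then show False using cost size unfolding join_cost_def by (meson add_le_less_mono mult_le_mono1 not_le)
  qed
  have "card (?S J') \<le> card (?S J - {v} \<union> {z})" using fin sub by (intro card_mono) auto
  also have "\<dots> \<le> Suc (card (?S J - {v}))" using card_Un_le[of "?S J - {v}" "{z}"] by simp
  also have "\<dots> = card (?S J)" using fin v by (intro card_Suc_Diff1) auto
  finally show "optimal_join V E J'"
    using size cost J J' unfolding optimal_join_def join_cost_def by (meson add_le_mono mult_le_mono1 order_trans)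
qed

section \<open>The degree sum around an independent neighbourhood\<close>

lemma few_cross_edges_arith:
  fixes a W d n S X :: int
  assumes n: "n = 1 + a + W" and ad: "d \<le> a" and d2: "2 \<le> d" and "a * (d - 1) \<le> X" "X \<le> W"
    and S: "S \<le> 2 * a + 2 * X + W * (W - 1)"
  shows "S \<le> (n - 1) * (n - 2 * d + 2)"
proof -
  have h1: "(n - 1) * (n - 2 * d + 2) - (2 * a + 2 * W + W * (W - 1)) = 2 * (n - 1) * (a - d + 1) - a * a - a"
    using n by (simp add: algebra_simps)
  have "a * d \<le> n - 1" using assms by (simp add: algebra_simps)
  then have h3: "2 * (a * d) * (a - d + 1) \<le> 2 * (n - 1) * (a - d + 1)" using ad by (intro mult_right_mono) auto
  have h4: "2 * (a * d) * (a - d + 1) - a * a - a = a * ((2 * d - 1) * (a - d) + d - 1)"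
    by (simp add: algebra_simps)
  have "0 \<le> (2 * d - 1) * (a - d)" using ad d2 by (intro mult_nonneg_nonneg) auto
  then have "0 \<le> (2 * d - 1) * (a - d) + d - 1" using d2 by linarith
  then have "0 \<le> a * ((2 * d - 1) * (a - d) + d - 1)" using ad d2 by simp
  then show ?thesis using S h1 h3 h4 assms by linarith
qed

lemma square_arith:
  fixes a W k d n S :: int
  assumes n: "n = 1 + a + W" and "d \<le> a" "d \<le> k + 2" "0 \<le> k" "k + 1 \<le> W" "2 \<le> d" "7 * d - 7 \<le> n"
    and S: "S \<le> 2 * a + 4 * W + k + k * (W - k) + (W - k - 1) * (W - 1)"
  shows "S \<le> (n - 1) * (n - 2 * d + 2)"
proof -
  have "W * W \<le> (n - 1 - d) * (n - 1 - d)" using assms by (intro mult_mono) auto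
  moreover have "- (k * k) + 2 * k + d * d \<le> n - 2"
  proof (cases "d = 2")
    case True
    have "0 \<le> (k - 1) * (k - 1)" by simp
    then show ?thesis using True assms by (simp add: algebra_simps)
  next
    case False
    then have "0 \<le> (k - (d - 2)) * (k + d - 4)" using assms by (intro mult_nonneg_nonneg) auto
    then show ?thesis using assms False by (simp add: algebra_simps)
  qed
  ultimately show ?thesis using S n by (simp add: algebra_simps)
qed

lemma card_neighbours_eq_sum: "finite B \<Longrightarrow> card (neighbours B E x) = (\<Sum>y\<in>B. if E x y then 1 else 0)"
  by (simp add: sum.inter_filter[symmetric])

lemma sum_card_neighbours_swap:
  assumes "finite A" "finite B" "\<And>x y. E x y \<Longrightarrow> E y x"
  shows "(\<Sum>x\<in>A. card (neighbours B E x)) = (\<Sum>y\<in>B. card (neighbours A E y))"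
proof -
  have "(\<Sum>x\<in>A. card (neighbours B E x)) = (\<Sum>x\<in>A. \<Sum>y\<in>B. if E y x then 1 else 0)"
    using assms by (auto simp: card_neighbours_eq_sum intro!: sum.cong)
  also have "\<dots> = (\<Sum>y\<in>B. card (neighbours A E y))"
    using assms(1) by (simp add: card_neighbours_eq_sum sum.swap[of _ A])
  finally show ?thesis .
qed

locale independent_neighbourhood =
  fixes V :: "'a set" and E :: "'a \<Rightarrow> 'a \<Rightarrow> bool" and v :: 'a
  assumes graph: "graph V E" and v: "v \<in> V"
    and independent: "\<And>a b. a \<in> neighbours V E v \<Longrightarrow> b \<in> neighbours V E v \<Longrightarrow> \<not> E a b"
begin

abbreviation N :: "'a set" where "N \<equiv> neighbours V E v"

definition W :: "'a set" where "W = V - N - {v}"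

lemma finite_N: "finite N" and finite_W: "finite W"
  using graphD(1)[OF graph] by (auto simp: W_def)

lemma V_eq: "V = insert v (N \<union> W)" and v_notin: "v \<notin> N \<union> W" and N_W_disjoint: "N \<inter> W = {}"
  using v graphD(4)[OF graph] by (auto simp: W_def)

lemma W_subset: "W \<subseteq> V"
  by (auto simp: W_def)

lemma card_V: "card V = 1 + card N + card W"
  using finite_N finite_W v_notin N_W_disjoint by (subst V_eq) (simp add: card_Un_disjoint)

lemma degree_split:
  "Defs.degree V E x = card (neighbours N E x) + card (neighbours W E x) + (if E x v then 1 else 0)"
proof -
  have "neighbours V E x = (neighbours N E x \<union> neighbours W E x) \<union> neighbours {v} E x"
    by (subst V_eq) auto
  then have "Defs.degree V E x = card ((neighbours N E x \<union> neighbours W E x) \<union> neighbours {v} E x)"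
    by (simp only: Defs.degree_def)
  also have "\<dots> = card (neighbours N E x \<union> neighbours W E x) + card (neighbours {v} E x)"
    using graphD(1)[OF graph] finite_W v_notin by (intro card_Un_disjoint) auto
  also have "card (neighbours N E x \<union> neighbours W E x) = card (neighbours N E x) + card (neighbours W E x)"
    using graphD(1)[OF graph] finite_W N_W_disjoint by (intro card_Un_disjoint) auto
  also have "neighbours {v} E x = (if E x v then {v} else {})" by auto
  finally show ?thesis by simp
qed

lemma degree_N:
  assumes "x \<in> N"
  shows "Defs.degree V E x = card (neighbours W E x) + 1"
proof -
  have "neighbours N E x = {}" using independent assms by blast
  then have "card (neighbours N E x) = 0" by (simp only: card.empty)
  moreover have "E x v" using assms graphD(5)[OF graph] by blast
  ultimately show ?thesis using degree_split[of x] by simp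
qed

lemma degree_W:
  assumes "y \<in> W"
  shows "Defs.degree V E y = card (neighbours N E y) + card (neighbours W E y)"
proof -
  have "\<not> E y v" using assms graphD(5)[OF graph] unfolding W_def by blast
  then show ?thesis by (simp add: degree_split[of y])
qed

lemma cross_edges_swap: "(\<Sum>x\<in>N. card (neighbours W E x)) = (\<Sum>y\<in>W. card (neighbours N E y))"
  using sum_card_neighbours_swap[OF finite_N finite_W] graphD(5)[OF graph] by blast

lemma degree_sum_eq:
  "degree_sum V E = 2 * card N + 2 * (\<Sum>y\<in>W. card (neighbours N E y)) + (\<Sum>y\<in>W. card (neighbours W E y))"
proof -
  have "degree_sum V E = Defs.degree V E v + (\<Sum>x\<in>N. Defs.degree V E x) + (\<Sum>y\<in>W. Defs.degree V E y)"
    using finite_N finite_W v_notin N_W_disjoint by (subst V_eq) (simp add: sum.union_disjoint)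
  moreover have "(\<Sum>x\<in>N. Defs.degree V E x) = (\<Sum>x\<in>N. card (neighbours W E x)) + card N"
    using degree_N by (simp add: sum_Suc)
  moreover have "(\<Sum>y\<in>W. Defs.degree V E y)
      = (\<Sum>y\<in>W. card (neighbours N E y)) + (\<Sum>y\<in>W. card (neighbours W E y))"
    using degree_W by (simp add: sum.distrib)
  moreover have "Defs.degree V E v = card N" by (simp add: Defs.degree_def)
  ultimately show ?thesis using cross_edges_swap by linarith
qed

lemma card_neighbours_W_less: "y \<in> W \<Longrightarrow> card (neighbours W E y) < card W"
  using finite_W graphD(4)[OF graph] by (intro psubset_card_mono) auto

lemma degree_sum_le_if_few_cross_edges:
  assumes d2: "2 \<le> \<delta>" and dmin: "\<forall>x\<in>V. \<delta> \<le> Defs.degree V E x"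
    and cross: "\<forall>y\<in>W. card (neighbours N E y) \<le> 1"
  shows "int (degree_sum V E) \<le> (int (card V) - 1) * (int (card V) - 2 * int \<delta> + 2)"
proof (rule few_cross_edges_arith)
  let ?X = "\<Sum>y\<in>W. int (card (neighbours N E y))"
  show "int (card V) = 1 + int (card N) + int (card W)" using card_V by simp
  show "int \<delta> \<le> int (card N)" using dmin v by (auto simp: Defs.degree_def)
  show "2 \<le> int \<delta>" using d2 by simp
  have "?X \<le> of_nat (card W) * 1" by (rule sum_bounded_above) (use cross in auto)
  then show "?X \<le> int (card W)" by simp
  have "of_nat (card N) * (int \<delta> - 1) \<le> (\<Sum>x\<in>N. int (card (neighbours W E x)))"
  proof (rule sum_bounded_below)
    fix x assume "x \<in> N"
    then show "int \<delta> - 1 \<le> int (card (neighbours W E x))" using dmin degree_N[of x] by force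
  qed
  then show "int (card N) * (int \<delta> - 1) \<le> ?X" using cross_edges_swap by (simp flip: of_nat_sum)
  have "(\<Sum>y\<in>W. int (card (neighbours W E y))) \<le> of_nat (card W) * (int (card W) - 1)"
  proof (rule sum_bounded_above)
    fix y assume "y \<in> W"
    then show "int (card (neighbours W E y)) \<le> int (card W) - 1" using card_neighbours_W_less[of y] by simp
  qed
  then show "int (degree_sum V E) \<le> 2 * int (card N) + 2 * ?X + int (card W) * (int (card W) - 1)"
    using degree_sum_eq by (simp flip: of_nat_sum)
qed

lemma card_neighbours_W_add_le:
  assumes indep_z: "\<And>p q. p \<in> neighbours V E z \<Longrightarrow> q \<in> neighbours V E z \<Longrightarrow> \<not> E p q"
    and y: "y \<in> neighbours W E z"
  shows "card (neighbours W E y) + card (neighbours W E z) \<le> card W"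
proof -
  have "neighbours W E y \<subseteq> W - neighbours W E z" using indep_z y W_subset by auto
  then have "card (neighbours W E y) \<le> card (W - neighbours W E z)" using finite_W by (intro card_mono) auto
  also have "\<dots> = card W - card (neighbours W E z)" using finite_W by (intro card_Diff_subset) auto
  finally show ?thesis using card_mono[OF finite_W, of "neighbours W E z"] by auto
qed

lemma sum_card_neighbours_W_le_if_square:
  assumes z: "z \<in> W"
    and indep_z: "\<And>p q. p \<in> neighbours V E z \<Longrightarrow> q \<in> neighbours V E z \<Longrightarrow> \<not> E p q"
  defines "k \<equiv> int (card (neighbours W E z))"
  shows "(\<Sum>y\<in>W. int (card (neighbours W E y)))
           \<le> k + k * (int (card W) - k) + (int (card W) - k - 1) * (int (card W) - 1)"
proof -
  define Z where "Z = neighbours W E z"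
  define R where "R = W - Z - {z}"
  have fin: "finite Z" "finite R" using finite_W by (auto simp: Z_def R_def)
  have zZ: "z \<notin> Z" "z \<notin> R" using graphD(4)[OF graph] by (auto simp: Z_def R_def)
  have W: "W = insert z (Z \<union> R)" "Z \<inter> R = {}" using z by (auto simp: Z_def R_def)
  have kZ: "k = int (card Z)" unfolding k_def Z_def ..
  have "card W = Suc (card Z + card R)" using fin zZ W by (subst W(1)) (simp add: card_Un_disjoint)
  then have cardR: "int (card R) = int (card W) - k - 1" using kZ by simp
  have "int (card (neighbours W E y)) \<le> int (card W) - k" if "y \<in> Z" for y
  proof -
    have "card (neighbours W E y) + card (neighbours W E z) \<le> card W"
    proof (rule card_neighbours_W_add_le)
      show "y \<in> neighbours W E z" using that unfolding Z_def .
    qed (rule indep_z)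
    then show ?thesis unfolding k_def by linarith
  qed
  then have "(\<Sum>y\<in>Z. int (card (neighbours W E y))) \<le> of_nat (card Z) * (int (card W) - k)"
    by (intro sum_bounded_above) auto
  moreover have "(\<Sum>y\<in>R. int (card (neighbours W E y))) \<le> of_nat (card R) * (int (card W) - 1)"
  proof (rule sum_bounded_above)
    fix y assume "y \<in> R"
    then show "int (card (neighbours W E y)) \<le> int (card W) - 1"
      using card_neighbours_W_less[of y] by (simp add: R_def)
  qed
  moreover have "(\<Sum>y\<in>W. int (card (neighbours W E y))) = k
      + (\<Sum>y\<in>Z. int (card (neighbours W E y))) + (\<Sum>y\<in>R. int (card (neighbours W E y)))"
  proof -
    define f where "f y = int (card (neighbours W E y))" for y
    have "sum f W = sum f (insert z (Z \<union> R))" using W(1) by (rule arg_cong)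
    also have "\<dots> = f z + sum f Z + sum f R" using fin zZ W(2) by (simp add: sum.union_disjoint)
    finally show ?thesis by (simp add: f_def k_def)
  qed
  ultimately show ?thesis using cardR kZ by simp
qed

lemma degree_sum_le_if_square:
  assumes d2: "2 \<le> \<delta>" and dmin: "\<forall>x\<in>V. \<delta> \<le> Defs.degree V E x"
    and n7: "7 * int \<delta> - 7 \<le> int (card V)"
    and cross: "\<forall>y\<in>W. card (neighbours N E y) \<le> 2"
    and z: "z \<in> W"
    and indep_z: "\<And>p q. p \<in> neighbours V E z \<Longrightarrow> q \<in> neighbours V E z \<Longrightarrow> \<not> E p q"
  shows "int (degree_sum V E) \<le> (int (card V) - 1) * (int (card V) - 2 * int \<delta> + 2)"
proof (rule square_arith)
  let ?k = "int (card (neighbours W E z))"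
  show "int (card V) = 1 + int (card N) + int (card W)" using card_V by simp
  show "int \<delta> \<le> int (card N)" using dmin v by (auto simp: Defs.degree_def)
  show "int \<delta> \<le> ?k + 2" using dmin degree_W[OF z] cross z by (force simp: W_def)
  show "0 \<le> ?k" by simp
  have "insert z (neighbours W E z) \<subseteq> W" using z by auto
  then have "card (insert z (neighbours W E z)) \<le> card W" using finite_W by (rule card_mono[rotated])
  moreover have "z \<notin> neighbours W E z" using graphD(4)[OF graph] by blast
  ultimately show "?k + 1 \<le> int (card W)" using finite_W by simp
  show "2 \<le> int \<delta>" using d2 by simp
  show "7 * int \<delta> - 7 \<le> int (card V)" by (rule n7)
  have "(\<Sum>y\<in>W. int (card (neighbours N E y))) \<le> of_nat (card W) * 2"
    by (rule sum_bounded_above) (use cross in auto)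
  then show "int (degree_sum V E) \<le> 2 * int (card N) + 4 * int (card W) + ?k + ?k * (int (card W) - ?k)
      + (int (card W) - ?k - 1) * (int (card W) - 1)"
    using degree_sum_eq sum_card_neighbours_W_le_if_square[OF z indep_z] by (simp flip: of_nat_sum)
qed

end

section \<open>Even factors\<close>

lemma card_neighbours_in_saturated_neighbourhood_le_two:
  assumes g: "graph V E" and J: "optimal_join V E J" and sat: "saturated V E J v"
    and y: "y \<in> V" "y \<noteq> v" "\<not> E v y"
  shows "card (neighbours (neighbours V E v) E y) \<le> 2"
proof (rule ccontr)
  assume "\<not> ?thesis"
  then have "3 \<le> card (neighbours (neighbours V E v) E y)" by simp
  then obtain T where "T \<subseteq> neighbours (neighbours V E v) E y" "card T = 3"
    by (rule obtain_subset_with_card_n)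
  moreover from \<open>card T = 3\<close> obtain u1 u2 u3 where "T = {u1, u2, u3}"
    and d: "u1 \<noteq> u2" "u1 \<noteq> u3" "u2 \<noteq> u3" unfolding card_3_iff by blast
  ultimately have u: "E v u1" "E v u2" "E v u3" "E y u1" "E y u2" "E y u3" and "u3 \<in> V" by auto
  have E: "E u1 y" "E u2 y" "E u3 y" using u(4-6) graphD(5)[OF g, of y] by blast+
  let ?J' = "edge_symdiff J (edges_of [(v, u1), (u1, y), (y, u2), (u2, v)])"
  have "saturated V E ?J' y" using optimal_join_square_switch(2)[OF g J sat u(1,2) E(1,2) d(1) y(2)] .
  then have "?J' y u3" by (rule saturatedD) (fact \<open>u3 \<in> V\<close> u(6))+
  moreover have "u3 \<noteq> v" "u2 \<noteq> y" using u y(3) graphD(4)[OF g] by auto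
  ultimately have "J y u3" using d y(2) by (auto simp: edge_symdiff_def edges_of_def)
  then have "J u3 y" using parity_joinD(2)[OF optimal_join_parity_join[OF J]] by blast
  moreover have "\<not> J u3 y"
    using optimal_join_square_not_in_join[OF g J sat u(3,1) E(3,1) d(2)[symmetric] y(2)] .
  ultimately show False by contradiction
qed

lemma optimal_join_unsaturated:
  assumes g: "graph V E" and J: "optimal_join V E J"
    and d2: "2 \<le> \<delta>" and dmin: "\<forall>x\<in>V. \<delta> \<le> Defs.degree V E x"
    and n7: "7 * int \<delta> - 7 \<le> int (card V)"
    and S: "(int (card V) - 1) * (int (card V) - 2 * int \<delta> + 2) < int (degree_sum V E)"
  shows "\<not> saturated V E J v"
proof
  assume sat: "saturated V E J v"
  then have v: "v \<in> V" unfolding saturated_def by blast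
  interpret independent_neighbourhood V E v
    using g v saturated_neighbours_independent[OF g J sat] by unfold_locales auto
  have cross: "\<forall>y\<in>W. card (neighbours N E y) \<le> 2"
    using card_neighbours_in_saturated_neighbourhood_le_two[OF g J sat] by (auto simp: W_def)
  show False
  proof (cases "\<exists>z\<in>W. 2 \<le> card (neighbours N E z)")
    case False
    then have "\<forall>y\<in>W. card (neighbours N E y) \<le> 1" by force
    then show False using degree_sum_le_if_few_cross_edges[OF d2 dmin] S by linarith
  next
    case True
    then obtain z where z: "z \<in> W" and two: "2 \<le> card (neighbours N E z)" by blast
    from two obtain T where "T \<subseteq> neighbours N E z" "card T = 2" by (rule obtain_subset_with_card_n)
    moreover from \<open>card T = 2\<close> obtain u w where "T = {u, w}" "u \<noteq> w" unfolding card_2_iff by blast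
    ultimately have u: "E v u" "E v w" "E z u" "E z w" "u \<noteq> w" by auto
    have zv: "z \<noteq> v" using z by (simp add: W_def)
    have E: "E u z" "E w z" using u(3,4) graphD(5)[OF g, of z] by blast+
    have "\<And>p q. p \<in> neighbours V E z \<Longrightarrow> q \<in> neighbours V E z \<Longrightarrow> \<not> E p q"
      using saturated_neighbours_independent[OF g optimal_join_square_switch[OF g J sat u(1,2) E u(5) zv]]
      by blast
    then show False using degree_sum_le_if_square[OF d2 dmin n7 cross z] S by fastforce
  qed
qed

lemma has_even_factor_if_degree_sum_gt:
  assumes g: "graph V E" and d2: "2 \<le> \<delta>" and dmin: "\<forall>x\<in>V. \<delta> \<le> Defs.degree V E x"
    and n7: "7 * real \<delta> - 7 \<le> real (card V)"
    and S: "(real (card V) - 1) * (real (card V) - 2 * real \<delta> + 2) < degree_sum V E"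
  shows "has_even_factor V E"
proof -
  obtain J where J: "optimal_join V E J" using optimal_join_exists[OF g] .
  have n7': "7 * int \<delta> - 7 \<le> int (card V)" using n7 by linarith
  have "real_of_int ((int (card V) - 1) * (int (card V) - 2 * int \<delta> + 2))
      < real_of_int (int (degree_sum V E))" using S by simp
  then have "(int (card V) - 1) * (int (card V) - 2 * int \<delta> + 2) < int (degree_sum V E)"
    by (simp only: of_int_less_iff)
  then have "\<forall>v\<in>V. \<not> saturated V E J v" using optimal_join_unsaturated[OF g J d2 dmin n7'] by blast
  then show ?thesis using has_even_factor_if_unsaturated_join[OF g optimal_join_parity_join[OF J]] by blast
qed

theorem theorem1p1:
  fixes V :: "'a set" and E :: "'a \<Rightarrow> 'a \<Rightarrow> bool" and \<delta> n :: nat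
  assumes "graph V E"
    and "connected_graph V E"
    and "\<delta> \<ge> 2"
    and "card V = n" and "even n"
    and "min_degree V E = \<delta>"
    and "real n \<ge> max (7 * real \<delta> - 7) ((real \<delta>)\<^sup>2 / 4 + real \<delta> / 2 + 6)"
    and "rho_Q V E \<ge> rho_Q (extremal_V n) (extremal_E n \<delta>)"
    and "\<not> graph_iso V E (extremal_V n) (extremal_E n \<delta>)"
  shows "has_even_factor V E"
proof (rule has_even_factor_if_degree_sum_gt[OF assms(1,3)])
  have ne: "V \<noteq> {}" using assms(2) unfolding connected_graph_def by blast
  show dmin: "\<forall>x\<in>V. \<delta> \<le> Defs.degree V E x"
    using min_degree_le[OF graphD(1)[OF assms(1)], of _ E] assms(6) by simp
  show n7: "7 * real \<delta> - 7 \<le> real (card V)" using assms(4,7) by simp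
  then have "2 * \<delta> \<le> n" using assms(3,4) by linarith
  then obtain \<mu> where "2 * real n - 2 * real \<delta> < \<mu>" "Q_eigenvalue (extremal_V n) (extremal_E n \<delta>) \<mu>"
    using extremal_Q_eigenvalue_gt[OF assms(3)] by blast
  moreover have "extremal_V n \<noteq> {}" using \<open>2 * \<delta> \<le> n\<close> assms(3) by (auto simp: extremal_V_def)
  ultimately have rho: "2 * (real (card V) - \<delta>) < rho_Q V E"
    using Q_eigenvalue_le_rho_Q[OF graph_extremal] assms(4,8) by fastforce
  show "(real (card V) - 1) * (real (card V) - 2 * real \<delta> + 2) < degree_sum V E"
  proof (rule ccontr)
    assume "\<not> ?thesis"
    then have "rho_Q V E \<le> 2 * (real (card V) - \<delta>)" using assms(3)
      by (intro Q_eigenvalue_le_if_degree_sum_le[OF assms(1) dmin _ _ rho_Q_is_Q_eigenvalue[OF assms(1) ne]]) auto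
    with rho show False by linarith
  qed
qed

end
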